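(* Let $\vec{\mathcal G}=([n],E)$ be an ergodic graph of a deterministic two-player mean-payoff game with $m=|E|$, and let the weights $(r_{ij})$ be independent absolutely continuous random variables with densities $f_{ij}$ such that $\mathbb E(r_{ij})\in[-1,1]$, $\mathrm{Var}(r_{ij})\le 1/\phi^2$ and $f_{ij}(y)\le\phi$ for all $(i,j),y$, for some $\phi>0$. Then for every $\varepsilon>0$, $$\mathbb P\Bigl(\Delta(r)\ge\frac{8m}{\varepsilon}\bigl(\phi+\sqrt{2m/\varepsilon}\bigr)\Bigr)\le\varepsilon .$$ In particular $\mathbb P\bigl(\Delta(r)\ge 8nm(\phi+\sqrt{2nm})\bigr)\le 1/n$.
   Context: Setting: directed graph $\vec{\mathcal G}=([n],E)$ without multiple edges, each vertex having an outgoing edge, $[n]=V_{\max}\uplus V_{\min}$, weights $r\in\mathbb R^E$. Ergodic equation in $(\lambda,u)$: $\lambda+u_i=\max_{(i,j)\in E}\{r_{ij}+u_j\}$ ($i\in V_{\max}$), $\lambda+u_i=\min_{(i,j)\in E}\{r_{ij}+u_j\}$ ($i\in V_{\min}$); $u$ is a bias if $(\lambda,u)$ solves it; ergodic graph: solvable for every $r$, in which case $\lambda$ (the value) is unique. A pair of policies (choices of outgoing edges at Max/Min vertices) is bias-induced if some bias makes each chosen edge attain the max/min. $\Xi$: pairs whose induced subgraph has exactly one directed cycle; $\mathcal P^{\sigma,\tau}$: set of $r$ for which $(\sigma,\tau)$ is the only bias-induced pair; $\mathcal U=\bigcup_\Xi\mathcal P^{\sigma,\tau}$ (its complement has measure zero,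 and for $r\in\mathcal U$ the bias is unique up to an additive constant). Condition number, for $r\in\mathcal U$: $\Delta(r)=\dfrac{\max\{|r_{ij}-\lambda|:(i,j)\in E\}}{\min\{|r_{ij}-\lambda+u_j-u_i|:(i,j)\in E,\ r_{ij}-\lambda+u_j-u_i\ne0\}}$, with $\lambda$ the value and $u$ a bias; by convention $\Delta(r)=1$ if the denominator's set is empty (only one pair of policies). *)

theory Defs
  imports "HOL-Probability.Probability"
begin

text \<open>Vertices are [n] = {1..n}; edges E are pairs of vertices; weights are functions
  r :: nat \<times> nat \<Rightarrow> real (only the values on E matter).
  Vmax \<subseteq> [n]; Vmin = [n] - Vmax.\<close>

definition game_graph :: "nat \<Rightarrow> (nat \<times> nat) set \<Rightarrow> nat set \<Rightarrow> bool" where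
  "game_graph n E Vmax \<longleftrightarrow> E \<subseteq> {1..n} \<times> {1..n} \<and> (\<forall>i\<in>{1..n}. \<exists>j. (i, j) \<in> E)
     \<and> Vmax \<subseteq> {1..n}"

definition ergodic_eq :: "nat \<Rightarrow> (nat \<times> nat) set \<Rightarrow> nat set \<Rightarrow> (nat \<times> nat \<Rightarrow> real)
     \<Rightarrow> real \<Rightarrow> (nat \<Rightarrow> real) \<Rightarrow> bool" where
  "ergodic_eq n E Vmax r lam u \<longleftrightarrow>
     (\<forall>i\<in>{1..n}. (i \<in> Vmax \<longrightarrow> lam + u i = Max {r (i, j) + u j | j. (i, j) \<in> E})
               \<and> (i \<notin> Vmax \<longrightarrow> lam + u i = Min {r (i, j) + u j | j. (i, j) \<in> E}))"

definition is_bias :: "nat \<Rightarrow> (nat \<times> nat) set \<Rightarrow> nat set \<Rightarrow> (nat \<times> nat \<Rightarrow> real)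
     \<Rightarrow> (nat \<Rightarrow> real) \<Rightarrow> bool" where
  "is_bias n E Vmax r u \<longleftrightarrow> (\<exists>lam. ergodic_eq n E Vmax r lam u)"

definition ergodic_graph :: "nat \<Rightarrow> (nat \<times> nat) set \<Rightarrow> nat set \<Rightarrow> bool" where
  "ergodic_graph n E Vmax \<longleftrightarrow> (\<forall>r. \<exists>lam u. ergodic_eq n E Vmax r lam u)"

definition game_value :: "nat \<Rightarrow> (nat \<times> nat) set \<Rightarrow> nat set \<Rightarrow> (nat \<times> nat \<Rightarrow> real) \<Rightarrow> real" where
  "game_value n E Vmax r = (THE lam. \<exists>u. ergodic_eq n E Vmax r lam u)"

text \<open>A pair of policies (sigma on Vmax, tau on Vmin) is encoded as one choice function s
  with (i, s i) \<in> E for every vertex i (sigma = s on Vmax, tau = s on Vmin);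
  s is normalized to 0 outside [n] so that pairs correspond bijectively to such s.\<close>
definition policy_pair :: "nat \<Rightarrow> (nat \<times> nat) set \<Rightarrow> (nat \<Rightarrow> nat) \<Rightarrow> bool" where
  "policy_pair n E s \<longleftrightarrow> (\<forall>i\<in>{1..n}. (i, s i) \<in> E) \<and> (\<forall>i. i \<notin> {1..n} \<longrightarrow> s i = 0)"

definition bias_induced :: "nat \<Rightarrow> (nat \<times> nat) set \<Rightarrow> nat set \<Rightarrow> (nat \<times> nat \<Rightarrow> real)
     \<Rightarrow> (nat \<Rightarrow> nat) \<Rightarrow> bool" where
  "bias_induced n E Vmax r s \<longleftrightarrow> policy_pair n E s \<and>
     (\<exists>lam u. ergodic_eq n E Vmax r lam u \<and> (\<forall>i\<in>{1..n}. lam + u i = r (i, s i) + u (s i)))"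

definition directed_cycle :: "(nat \<times> nat) set \<Rightarrow> (nat \<times> nat) set \<Rightarrow> bool" where
  "directed_cycle F C \<longleftrightarrow> (\<exists>vs. vs \<noteq> [] \<and> distinct vs \<and>
     (\<forall>k<length vs. (vs ! k, vs ! ((k + 1) mod length vs)) \<in> F) \<and>
     C = {(vs ! k, vs ! ((k + 1) mod length vs)) | k. k < length vs})"

definition policy_subgraph :: "nat \<Rightarrow> (nat \<Rightarrow> nat) \<Rightarrow> (nat \<times> nat) set" where
  "policy_subgraph n s = {(i, s i) | i. i \<in> {1..n}}"

definition Xi :: "nat \<Rightarrow> (nat \<times> nat) set \<Rightarrow> (nat \<Rightarrow> nat) set" where
  "Xi n E = {s. policy_pair n E s \<and> (\<exists>!C. directed_cycle (policy_subgraph n s) C)}"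

definition P_pol :: "nat \<Rightarrow> (nat \<times> nat) set \<Rightarrow> nat set \<Rightarrow> (nat \<Rightarrow> nat)
     \<Rightarrow> (nat \<times> nat \<Rightarrow> real) set" where
  "P_pol n E Vmax s = {r. bias_induced n E Vmax r s \<and>
       (\<forall>s'. bias_induced n E Vmax r s' \<longrightarrow> s' = s)}"

definition U_set :: "nat \<Rightarrow> (nat \<times> nat) set \<Rightarrow> nat set \<Rightarrow> (nat \<times> nat \<Rightarrow> real) set" where
  "U_set n E Vmax = (\<Union>s\<in>Xi n E. P_pol n E Vmax s)"

text \<open>Condition number (meaningful for r in U, where the bias is unique up to constants).\<close>
definition cond_number :: "nat \<Rightarrow> (nat \<times> nat) set \<Rightarrow> nat set \<Rightarrow> (nat \<times> nat \<Rightarrow> real) \<Rightarrow> real" where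
  "cond_number n E Vmax r =
     (let lam = game_value n E Vmax r;
          u = (SOME u. ergodic_eq n E Vmax r lam u);
          S = {\<bar>r (i, j) - lam + u j - u i\<bar> | i j. (i, j) \<in> E \<and> r (i, j) - lam + u j - u i \<noteq> 0}
      in if S = {} then 1 else Max {\<bar>r e - lam\<bar> | e. e \<in> E} / Min S)"

end

theory Submission
  imports Defs "HOL-Combinatorics.Orbits"
begin

text \<open>For weights in \<open>\<U>\<close> exactly one pair of policies \<open>s \<in> \<Xi>\<close> is bias-induced, and its value
  and bias are explicit: the value is the mean weight of the unique cycle of \<open>s\<close>, and the bias
  is a potential along the paths of \<open>s\<close> into that cycle. Hence the reduced cost
  \<open>r\<^sub>e - \<lambda> + u\<^sub>j - u\<^sub>i\<close> of an edge \<open>e = (i, j)\<close> not used by \<open>s\<close> equals \<open>r\<^sub>e - \<theta>\<close>, where the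
  critical weight \<open>\<theta>\<close> does not depend on \<open>r\<^sub>e\<close>. Whether \<open>s\<close> still solves the ergodic equation
  is monotone in \<open>r\<^sub>e\<close>, so for fixed weights off \<open>e\<close> the set of values of \<open>r\<^sub>e\<close> for which \<open>s\<close> is
  the unique certified pair avoiding \<open>e\<close> and \<open>0 < |r\<^sub>e - \<theta>| < \<delta>\<close> lies in an interval of radius \<open>\<delta>\<close>;
  by independence and the density bound its probability is at most \<open>2\<phi>\<delta>\<close>.
  If \<open>\<Delta>(r) \<ge> K\<close>, some edge has nonzero reduced cost below \<open>T/K\<close>, where \<open>T\<close> bounds the spread of the
  weights; Chebyshev's inequality controls \<open>T\<close>, and a union bound over the edges concludes.\<close>

section \<open>Measure-theoretic tools\<close>

lemma pred_borel_eq: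
  "(f :: _ \<Rightarrow> real) \<in> borel_measurable M \<Longrightarrow> g \<in> borel_measurable M \<Longrightarrow> Measurable.pred M (\<lambda>x. f x = g x)"
  unfolding pred_def by (rule borel_measurable_eq)

lemma pred_borel_le:
  "(f :: _ \<Rightarrow> real) \<in> borel_measurable M \<Longrightarrow> g \<in> borel_measurable M \<Longrightarrow> Measurable.pred M (\<lambda>x. f x \<le> g x)"
  unfolding pred_def by (rule borel_measurable_le)

lemma pred_borel_less:
  "(f :: _ \<Rightarrow> real) \<in> borel_measurable M \<Longrightarrow> g \<in> borel_measurable M \<Longrightarrow> Measurable.pred M (\<lambda>x. f x < g x)"
  unfolding pred_def by (rule borel_measurable_less)

lemma emeasure_density_interval_le:
  fixes f :: "real \<Rightarrow> real"
  assumes "(\<lambda>y. ennreal (f y)) \<in> borel_measurable lborel" "\<forall>y. f y \<le> \<phi>" "\<delta> \<ge> 0" "\<phi> \<ge> 0"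
  shows "emeasure (density lborel (\<lambda>y. ennreal (f y))) {c - \<delta>..c + \<delta>} \<le> ennreal (2 * \<phi> * \<delta>)"
proof -
  have "emeasure (density lborel (\<lambda>y. ennreal (f y))) {c - \<delta>..c + \<delta>}
      = (\<integral>\<^sup>+y. ennreal (f y) * indicator {c - \<delta>..c + \<delta>} y \<partial>lborel)"
    using assms(1) by (intro emeasure_density) auto
  also have "\<dots> \<le> (\<integral>\<^sup>+y. ennreal \<phi> * indicator {c - \<delta>..c + \<delta>} y \<partial>lborel)"
    using assms(2) by (intro nn_integral_mono) (auto split: split_indicator intro: ennreal_leI)
  also have "\<dots> = ennreal \<phi> * ennreal (2 * \<delta>)"
    using assms(3) by (subst nn_integral_cmult_indicator) auto
  also have "\<dots> = ennreal (2 * \<phi> * \<delta>)"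
    using assms(3,4) by (simp add: ennreal_mult[symmetric] mult_ac)
  finally show ?thesis .
qed

text \<open>By independence, the probability of the event is the average over \<open>Y\<close> of the
  probabilities of its sections, and each of these is at most \<open>2\<phi>\<delta>\<close>.\<close>

lemma (in prob_space) indep_section_prob_le:
  fixes X :: "'a \<Rightarrow> real" and f :: "real \<Rightarrow> real"
  assumes indep: "indep_var S Y T Z"
    and dist: "distributed M lborel X (\<lambda>y. ennreal (f y))" "\<forall>y. f y \<le> \<phi>" "\<phi> \<ge> 0"
    and X: "\<And>\<omega>. \<omega> \<in> space M \<Longrightarrow> X \<omega> = \<pi> (Z \<omega>)"
    and G: "G \<in> sets (S \<Otimes>\<^sub>M T)" "\<delta> \<ge> 0"
    and sections: "\<And>y. y \<in> space S \<Longrightarrow> \<exists>c. \<forall>z. (y, z) \<in> G \<longrightarrow> \<bar>\<pi> z - c\<bar> < \<delta>"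
  shows "prob {\<omega> \<in> space M. (Y \<omega>, Z \<omega>) \<in> G} \<le> 2 * \<phi> * \<delta>"
proof -
  have Y: "random_variable S Y" and Z: "random_variable T Z"
    using indep_var_rv1[OF indep] indep_var_rv2[OF indep] by auto
  interpret PY: prob_space "distr M S Y" by (rule prob_space_distr[OF Y])
  interpret PZ: prob_space "distr M T Z" by (rule prob_space_distr[OF Z])
  have Xm: "X \<in> measurable M lborel" using distributed_measurable[OF dist(1)] .
  have section_le: "emeasure (distr M T Z) (Pair y -` G) \<le> ennreal (2 * \<phi> * \<delta>)"
    if y: "y \<in> space S" for y
  proof -
    obtain c where c: "\<forall>z. (y, z) \<in> G \<longrightarrow> \<bar>\<pi> z - c\<bar> < \<delta>" using sections[OF y] by blast
    have "emeasure (distr M T Z) (Pair y -` G) = emeasure M (Z -` (Pair y -` G) \<inter> space M)"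
      by (rule emeasure_distr[OF Z sets_Pair1[OF G(1)]])
    also have "\<dots> \<le> emeasure M (X -` {c - \<delta>..c + \<delta>} \<inter> space M)"
      using c X Xm by (intro emeasure_mono) (force simp: abs_less_iff, simp add: measurable_sets)
    also have "\<dots> = emeasure (density lborel (\<lambda>y. ennreal (f y))) {c - \<delta>..c + \<delta>}"
      using emeasure_distr[OF Xm, of "{c - \<delta>..c + \<delta>}"] distributed_distr_eq_density[OF dist(1)] by simp
    also have "\<dots> \<le> ennreal (2 * \<phi> * \<delta>)"
      by (rule emeasure_density_interval_le[OF distributed_borel_measurable[OF dist(1)] dist(2) G(2) dist(3)])
    finally show ?thesis .
  qed
  have "emeasure M {\<omega> \<in> space M. (Y \<omega>, Z \<omega>) \<in> G} = emeasure (distr M (S \<Otimes>\<^sub>M T) (\<lambda>\<omega>. (Y \<omega>, Z \<omega>))) G"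
    using G(1) measurable_Pair[OF Y Z] by (subst emeasure_distr) (auto intro!: arg_cong[where f="emeasure M"])
  also have "\<dots> = emeasure (distr M S Y \<Otimes>\<^sub>M distr M T Z) G"
    using indep_var_distribution_eq indep by metis
  also have "\<dots> = (\<integral>\<^sup>+y. emeasure (distr M T Z) (Pair y -` G) \<partial>distr M S Y)"
    using G(1) by (intro PZ.emeasure_pair_measure_alt) simp
  also have "\<dots> \<le> (\<integral>\<^sup>+y. ennreal (2 * \<phi> * \<delta>) \<partial>distr M S Y)"
    using section_le by (intro nn_integral_mono) simp
  also have "\<dots> = ennreal (2 * \<phi> * \<delta>)" using PY.emeasure_space_1 by simp
  finally show ?thesis using G(2) dist(3) by (simp add: emeasure_eq_measure)
qed

lemma (in prob_space) prob_deviation_union_le: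
  fixes X :: "'i \<Rightarrow> 'a \<Rightarrow> real"
  assumes "finite I" "t > 0"
    and "\<And>i. i \<in> I \<Longrightarrow> random_variable borel (X i)" "\<And>i. i \<in> I \<Longrightarrow> integrable M (\<lambda>\<omega>. (X i \<omega>)\<^sup>2)"
    and "\<And>i. i \<in> I \<Longrightarrow> variance (X i) \<le> v"
  shows "prob (\<Union>i\<in>I. {\<omega> \<in> space M. t \<le> \<bar>X i \<omega> - expectation (X i)\<bar>}) \<le> card I * (v / t\<^sup>2)"
proof -
  have "prob (\<Union>i\<in>I. {\<omega> \<in> space M. t \<le> \<bar>X i \<omega> - expectation (X i)\<bar>})
      \<le> (\<Sum>i\<in>I. prob {\<omega> \<in> space M. t \<le> \<bar>X i \<omega> - expectation (X i)\<bar>})"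
    using assms(3) by (intro measure_UNION_le assms(1)) measurable
  also have "\<dots> \<le> (\<Sum>i\<in>I. v / t\<^sup>2)"
  proof (intro sum_mono)
    fix i assume i: "i \<in> I"
    have "prob {\<omega> \<in> space M. t \<le> \<bar>X i \<omega> - expectation (X i)\<bar>} \<le> variance (X i) / t\<^sup>2"
      using Chebyshev_inequality[OF assms(3,4)[OF i] assms(2)] by simp
    also have "\<dots> \<le> v / t\<^sup>2" using assms(5)[OF i] by (simp add: divide_right_mono)
    finally show "prob {\<omega> \<in> space M. t \<le> \<bar>X i \<omega> - expectation (X i)\<bar>} \<le> v / t\<^sup>2" .
  qed
  finally show ?thesis by simp
qed

section \<open>Mean-payoff games\<close>

locale mean_payoff_game =
  fixes n :: nat and E :: "(nat \<times> nat) set" and Vmax :: "nat set"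
  assumes game_graph: "game_graph n E Vmax"
begin

lemma finite_edges: "finite E"
  using game_graph unfolding game_graph_def by (meson finite_SigmaI finite_atLeastAtMost finite_subset)

lemma edge_vertices:
  assumes "(i, j) \<in> E" shows "i \<in> {1..n}" "j \<in> {1..n}"
  using assms game_graph unfolding game_graph_def by auto

lemma policy_pair_edge:
  assumes "policy_pair n E s" "i \<in> {1..n}" shows "(i, s i) \<in> E" "s i \<in> {1..n}"
  using assms edge_vertices unfolding policy_pair_def by blast+

lemma policy_pair_funpow:
  assumes "policy_pair n E s" "i \<in> {1..n}" shows "(s ^^ t) i \<in> {1..n}"
  by (induction t) (use assms policy_pair_edge in auto)

definition ergodic_ineqs :: "(nat \<times> nat \<Rightarrow> real) \<Rightarrow> real \<Rightarrow> (nat \<Rightarrow> real) \<Rightarrow> bool" where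
  "ergodic_ineqs r l u \<longleftrightarrow> (\<forall>(i, j)\<in>E.
     (i \<in> Vmax \<longrightarrow> r (i, j) + u j \<le> l + u i) \<and> (i \<notin> Vmax \<longrightarrow> l + u i \<le> r (i, j) + u j))"

definition tight :: "(nat \<Rightarrow> nat) \<Rightarrow> (nat \<times> nat \<Rightarrow> real) \<Rightarrow> real \<Rightarrow> (nat \<Rightarrow> real) \<Rightarrow> bool" where
  "tight s r l u \<longleftrightarrow> (\<forall>i\<in>{1..n}. l + u i = r (i, s i) + u (s i))"

lemma successor_values:
  assumes "i \<in> {1..n}"
  shows "finite {r (i, j) + u j | j. (i, j) \<in> E}" "{r (i, j) + u j | j. (i, j) \<in> E} \<noteq> {}"
proof -
  have "{r (i, j) + u j | j. (i, j) \<in> E} = (\<lambda>j. r (i, j) + u j) ` {j. (i, j) \<in> E}" by auto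
  moreover have "{j. (i, j) \<in> E} \<subseteq> {1..n}" using edge_vertices by auto
  ultimately show "finite {r (i, j) + u j | j. (i, j) \<in> E}" by (metis finite_atLeastAtMost finite_imageI finite_subset)
  show "{r (i, j) + u j | j. (i, j) \<in> E} \<noteq> {}" using assms game_graph unfolding game_graph_def by auto
qed

lemma ergodic_eq_iff:
  "ergodic_eq n E Vmax r l u \<longleftrightarrow>
     ergodic_ineqs r l u \<and> (\<forall>i\<in>{1..n}. \<exists>j. (i, j) \<in> E \<and> l + u i = r (i, j) + u j)"
proof -
  have "(i \<in> Vmax \<longrightarrow> l + u i = Max S) \<and> (i \<notin> Vmax \<longrightarrow> l + u i = Min S) \<longleftrightarrow>
          (\<forall>x\<in>S. (i \<in> Vmax \<longrightarrow> x \<le> l + u i) \<and> (i \<notin> Vmax \<longrightarrow> l + u i \<le> x)) \<and> l + u i \<in> S"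
    if "finite S" "S \<noteq> {}" for i and S :: "real set"
    using that by (cases "i \<in> Vmax") (auto simp: eq_commute[of "l + u i"] Max_eq_iff Min_eq_iff)
  from this[OF successor_values(1,2)[of _ r u]]
  have "ergodic_eq n E Vmax r l u \<longleftrightarrow> (\<forall>i\<in>{1..n}.
          (\<forall>x\<in>{r (i, j) + u j | j. (i, j) \<in> E}. (i \<in> Vmax \<longrightarrow> x \<le> l + u i) \<and> (i \<notin> Vmax \<longrightarrow> l + u i \<le> x))
          \<and> l + u i \<in> {r (i, j) + u j | j. (i, j) \<in> E})"
    unfolding ergodic_eq_def by (intro ball_cong) auto
  then show ?thesis
    unfolding ergodic_ineqs_def using edge_vertices by blast
qed

lemma ergodic_eq_iff_tight:
  "ergodic_eq n E Vmax r l u \<longleftrightarrow> ergodic_ineqs r l u \<and> (\<exists>s. policy_pair n E s \<and> tight s r l u)"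
proof
  assume "ergodic_eq n E Vmax r l u"
  then have ineqs: "ergodic_ineqs r l u"
    and "\<forall>i\<in>{1..n}. \<exists>j. (i, j) \<in> E \<and> l + u i = r (i, j) + u j"
    unfolding ergodic_eq_iff by blast+
  then obtain s where s: "\<forall>i\<in>{1..n}. (i, s i) \<in> E \<and> l + u i = r (i, s i) + u (s i)"
    by metis
  define s' where "s' i = (if i \<in> {1..n} then s i else 0)" for i
  have "policy_pair n E s' \<and> tight s' r l u"
    using s unfolding policy_pair_def tight_def s'_def by simp
  with ineqs show "ergodic_ineqs r l u \<and> (\<exists>s. policy_pair n E s \<and> tight s r l u)" by blast
next
  assume "ergodic_ineqs r l u \<and> (\<exists>s. policy_pair n E s \<and> tight s r l u)"
  then show "ergodic_eq n E Vmax r l u"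
    unfolding ergodic_eq_iff policy_pair_def tight_def by blast
qed

lemma bias_induced_iff:
  "bias_induced n E Vmax r s \<longleftrightarrow> policy_pair n E s \<and> (\<exists>l u. ergodic_eq n E Vmax r l u \<and> tight s r l u)"
  unfolding bias_induced_def tight_def by blast

lemma ergodic_eq_shift:
  assumes "ergodic_eq n E Vmax r l u" "\<forall>i\<in>{1..n}. u' i = u i + c"
  shows "ergodic_eq n E Vmax r l u'"
proof -
  have "\<forall>(i, j)\<in>E. u' j - u' i = u j - u i"
    using assms(2) edge_vertices by fastforce
  with assms(1) show ?thesis
    unfolding ergodic_eq_iff ergodic_ineqs_def using assms(2) edge_vertices
    by (smt (verit, best) case_prodD case_prodI2)
qed

lemma ergodic_eq_value_le:
  assumes "n \<ge> 1" "ergodic_eq n E Vmax r l u" "ergodic_eq n E Vmax r l' u'"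
  shows "l \<le> l'"
proof -
  obtain i where i: "i \<in> {1..n}" and max: "\<forall>k\<in>{1..n}. u k - u' k \<le> u i - u' i"
    using Max_in[of "(\<lambda>i. u i - u' i) ` {1..n}"] Max_ge[of "(\<lambda>i. u i - u' i) ` {1..n}"] assms(1)
    by fastforce
  from assms(2,3) have ineqs: "ergodic_ineqs r l u" "ergodic_ineqs r l' u'"
    and tight: "\<forall>i\<in>{1..n}. \<exists>j. (i, j) \<in> E \<and> l + u i = r (i, j) + u j"
      "\<forall>i\<in>{1..n}. \<exists>j. (i, j) \<in> E \<and> l' + u' i = r (i, j) + u' j"
    unfolding ergodic_eq_iff by blast+
  show ?thesis
  proof (cases "i \<in> Vmax")
    case True
    obtain j where j: "(i, j) \<in> E" "l + u i = r (i, j) + u j" using tight(1) i by blast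
    have "r (i, j) + u' j \<le> l' + u' i" using ineqs(2) j(1) True unfolding ergodic_ineqs_def by blast
    with j max edge_vertices(2)[OF j(1)] show ?thesis by fastforce
  next
    case False
    obtain j where j: "(i, j) \<in> E" "l' + u' i = r (i, j) + u' j" using tight(2) i by blast
    have "l + u i \<le> r (i, j) + u j" using ineqs(1) j(1) False unfolding ergodic_ineqs_def by blast
    with j max edge_vertices(2)[OF j(1)] show ?thesis by fastforce
  qed
qed

lemma game_value_eqI:
  assumes "n \<ge> 1" "ergodic_eq n E Vmax r l u"
  shows "game_value n E Vmax r = l"
  unfolding game_value_def
  using assms ergodic_eq_value_le[OF assms(1)] by (intro the_equality) (auto intro: order.antisym)

lemma policy_pair_reaches_periodic:
  assumes "policy_pair n E s" "i \<in> {1..n}"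
  obtains p where "(s ^^ p) i \<in> orbit s ((s ^^ p) i)"
proof -
  have "\<not> inj_on (\<lambda>t. (s ^^ t) i) {0..n}"
  proof
    assume "inj_on (\<lambda>t. (s ^^ t) i) {0..n}"
    then have "card ((\<lambda>t. (s ^^ t) i) ` {0..n}) = n + 1" by (simp add: card_image)
    moreover have "card ((\<lambda>t. (s ^^ t) i) ` {0..n}) \<le> card {1..n}"
      by (rule card_mono) (use policy_pair_funpow[OF assms] in auto)
    ultimately show False by simp
  qed
  then have "\<exists>p q. p < q \<and> (s ^^ p) i = (s ^^ q) i"
    unfolding inj_on_def by (metis linorder_neqE_nat)
  then obtain p q where pq: "p < q" "(s ^^ p) i = (s ^^ q) i" by blast
  have "(s ^^ (q - p)) ((s ^^ p) i) = (s ^^ (q - p + p)) i" by (simp add: funpow_add)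
  with pq have "(s ^^ (q - p)) ((s ^^ p) i) = (s ^^ p) i" by simp
  with pq(1) have "(s ^^ p) i \<in> orbit s ((s ^^ p) i)"
    unfolding orbit_altdef by (auto intro!: exI[of _ "q - p"])
  then show thesis by (rule that)
qed

lemma periodic_directed_cycle:
  assumes "policy_pair n E s" "y \<in> {1..n}" "y \<in> orbit s y"
  shows "directed_cycle (policy_subgraph n s) {(x, s x) | x. x \<in> orbit s y}"
proof -
  define L where "L = funpow_dist1 s y y"
  define vs where "vs = map (\<lambda>t. (s ^^ t) y) [0..<L]"
  have len: "length vs = L" "L > 0" by (simp_all add: vs_def L_def)
  have orbit: "orbit s y = (\<lambda>t. (s ^^ t) y) ` {0..<L}"
    using orbit_conv_funpow_dist1[OF assms(3)] by (simp add: L_def)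
  have succ: "vs ! ((k + 1) mod L) = s (vs ! k)" if "k < L" for k
  proof (cases "k + 1 < L")
    case True
    then show ?thesis by (simp add: vs_def del: upt_Suc)
  next
    case False
    with that have "k + 1 = L" by simp
    then have "s ((s ^^ k) y) = y"
      using funpow_dist1_prop[OF assms(3)] by (simp add: L_def)
    with \<open>k + 1 = L\<close> that show ?thesis by (simp add: vs_def del: upt_Suc)
  qed
  have vs_nth: "vs ! k = (s ^^ k) y" if "k < L" for k
    using that by (simp add: vs_def del: upt_Suc)
  have "inj_on (\<lambda>t. (s ^^ t) y) {0..<L}"
    unfolding L_def by (rule inj_on_funpow_dist1[OF assms(3)])
  then have "distinct vs" by (simp add: vs_def distinct_map del: upt_Suc)
  moreover have "\<forall>k<length vs. (vs ! k, vs ! ((k + 1) mod length vs)) \<in> policy_subgraph n s"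
    using succ vs_nth policy_pair_funpow[OF assms(1,2)] len(1)
    unfolding policy_subgraph_def by auto
  moreover have "{(x, s x) | x. x \<in> orbit s y} = {(vs ! k, vs ! ((k + 1) mod length vs)) | k. k < length vs}"
    unfolding orbit len(1) using succ vs_nth by force
  ultimately show ?thesis
    unfolding directed_cycle_def using len by (intro exI[of _ vs]) auto
qed

lemma Xi_cycle_vertex_exists:
  assumes "s \<in> Xi n E"
  shows "\<exists>c. c \<in> {1..n} \<and> c \<in> orbit s c \<and> (\<forall>i\<in>{1..n}. \<exists>t. (s ^^ t) i = c)"
proof -
  have pp: "policy_pair n E s" using assms unfolding Xi_def by simp
  obtain C where C: "directed_cycle (policy_subgraph n s) C"
    and unique: "\<And>C'. directed_cycle (policy_subgraph n s) C' \<Longrightarrow> C' = C"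
    using assms unfolding Xi_def by blast
  obtain c where c: "(c, s c) \<in> C" "c \<in> {1..n}"
  proof -
    obtain vs where vs: "vs \<noteq> []" "(vs ! 0, vs ! (1 mod length vs)) \<in> policy_subgraph n s"
      "C = {(vs ! k, vs ! ((k + 1) mod length vs)) | k. k < length vs}"
      using C unfolding directed_cycle_def by fastforce
    then have "(vs ! 0, vs ! (1 mod length vs)) \<in> C" by force
    with vs(2) show thesis unfolding policy_subgraph_def by (auto intro: that)
  qed
  have reach: "\<exists>t. (s ^^ t) i = c" if i: "i \<in> {1..n}" for i
  proof -
    obtain p where y: "(s ^^ p) i \<in> orbit s ((s ^^ p) i)"
      using policy_pair_reaches_periodic[OF pp i] .
    have "{(x, s x) | x. x \<in> orbit s ((s ^^ p) i)} = C"
      by (rule unique[OF periodic_directed_cycle[OF pp policy_pair_funpow[OF pp i] y]])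
    with c(1) have "c \<in> orbit s ((s ^^ p) i)" by auto
    then obtain k where "(s ^^ k) ((s ^^ p) i) = c" by (auto simp: orbit_altdef)
    then show ?thesis by (metis comp_apply funpow_add)
  qed
  obtain t where "(s ^^ t) (s c) = c" using reach policy_pair_edge(2)[OF pp c(2)] by blast
  then have "c \<in> orbit s c" by (auto simp: orbit_altdef funpow_swap1 intro!: exI[of _ "Suc t"])
  with c(2) reach show ?thesis by blast
qed

subsection \<open>Cycle mean and potential\<close>

definition cycle_vertex :: "(nat \<Rightarrow> nat) \<Rightarrow> nat" where
  "cycle_vertex s = (SOME c. c \<in> {1..n} \<and> c \<in> orbit s c \<and> (\<forall>i\<in>{1..n}. \<exists>t. (s ^^ t) i = c))"

lemma Xi_cycle_vertex:
  assumes "s \<in> Xi n E"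
  shows "cycle_vertex s \<in> {1..n}" "cycle_vertex s \<in> orbit s (cycle_vertex s)"
    and "i \<in> {1..n} \<Longrightarrow> (s ^^ funpow_dist s i (cycle_vertex s)) i = cycle_vertex s"
proof -
  have "cycle_vertex s \<in> {1..n} \<and> cycle_vertex s \<in> orbit s (cycle_vertex s) \<and>
        (\<forall>i\<in>{1..n}. \<exists>t. (s ^^ t) i = cycle_vertex s)"
    unfolding cycle_vertex_def using someI_ex[OF Xi_cycle_vertex_exists[OF assms]] by blast
  then show "cycle_vertex s \<in> {1..n}" "cycle_vertex s \<in> orbit s (cycle_vertex s)"
    and "i \<in> {1..n} \<Longrightarrow> (s ^^ funpow_dist s i (cycle_vertex s)) i = cycle_vertex s"
    unfolding funpow_dist_def by (auto intro: LeastI_ex)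
qed

text \<open>For tight \<open>(\<lambda>, u)\<close> these quantities are forced (\<open>tight_imp_cycle_mean_potential\<close>):
  \<open>\<lambda>\<close> is the mean weight of the cycle through the cycle vertex \<open>c\<close>, of length
  \<open>funpow_dist1 s c c\<close>, and \<open>u i - u c\<close> is the weight of the \<open>s\<close>-path from \<open>i\<close> to \<open>c\<close>, of length
  \<open>funpow_dist s i c\<close>, less \<open>\<lambda>\<close> per step.\<close>

definition path_weight :: "(nat \<Rightarrow> nat) \<Rightarrow> (nat \<times> nat \<Rightarrow> real) \<Rightarrow> nat \<Rightarrow> nat \<Rightarrow> real" where
  "path_weight s r i k = (\<Sum>t<k. r ((s ^^ t) i, (s ^^ Suc t) i))"

definition cycle_mean :: "(nat \<Rightarrow> nat) \<Rightarrow> (nat \<times> nat \<Rightarrow> real) \<Rightarrow> real" where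
  "cycle_mean s r = path_weight s r (cycle_vertex s) (funpow_dist1 s (cycle_vertex s) (cycle_vertex s))
     / funpow_dist1 s (cycle_vertex s) (cycle_vertex s)"

definition potential :: "(nat \<Rightarrow> nat) \<Rightarrow> (nat \<times> nat \<Rightarrow> real) \<Rightarrow> nat \<Rightarrow> real" where
  "potential s r i = path_weight s r i (funpow_dist s i (cycle_vertex s))
     - funpow_dist s i (cycle_vertex s) * cycle_mean s r"

lemma path_weight_tight:
  assumes "policy_pair n E s" "tight s r l u" "i \<in> {1..n}"
  shows "path_weight s r i k = k * l + u i - u ((s ^^ k) i)"
proof (induction k)
  case (Suc k)
  have "l + u ((s ^^ k) i) = r ((s ^^ k) i, s ((s ^^ k) i)) + u (s ((s ^^ k) i))"
    using assms policy_pair_funpow unfolding tight_def by blast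
  with Suc show ?case by (simp add: path_weight_def algebra_simps)
qed (simp add: path_weight_def)

lemma tight_imp_cycle_mean_potential:
  assumes "s \<in> Xi n E" "tight s r l u"
  shows "l = cycle_mean s r" "i \<in> {1..n} \<Longrightarrow> u i = potential s r i + u (cycle_vertex s)"
proof -
  have pp: "policy_pair n E s" using assms(1) unfolding Xi_def by simp
  note c = Xi_cycle_vertex[OF assms(1)]
  show l: "l = cycle_mean s r"
    using path_weight_tight[OF pp assms(2) c(1)] funpow_dist1_prop[OF c(2)]
    unfolding cycle_mean_def by (simp del: of_nat_Suc)
  show "u i = potential s r i + u (cycle_vertex s)" if "i \<in> {1..n}"
    using path_weight_tight[OF pp assms(2) that] c(3)[OF that]
    unfolding potential_def l[symmetric] by simp
qed

lemma cycle_mean_potential_cong: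
  assumes "s \<in> Xi n E" "\<forall>i\<in>{1..n}. r (i, s i) = r' (i, s i)"
  shows "cycle_mean s r = cycle_mean s r'" "i \<in> {1..n} \<Longrightarrow> potential s r i = potential s r' i"
proof -
  have pp: "policy_pair n E s" using assms(1) unfolding Xi_def by simp
  have pw: "path_weight s r i k = path_weight s r' i k" if "i \<in> {1..n}" for i k
    unfolding path_weight_def using assms(2) policy_pair_funpow[OF pp that] by (intro sum.cong) auto
  show cm: "cycle_mean s r = cycle_mean s r'"
    unfolding cycle_mean_def using pw Xi_cycle_vertex(1)[OF assms(1)] by simp
  show "potential s r i = potential s r' i" if "i \<in> {1..n}"
    unfolding potential_def cm using pw[OF that] by simp
qed

lemma tight_shift:
  assumes "policy_pair n E s" "tight s r l u" "\<forall>i\<in>{1..n}. u' i = u i + c"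
  shows "tight s r l u'"
  using assms policy_pair_edge(2) unfolding tight_def by fastforce

definition certified :: "(nat \<Rightarrow> nat) \<Rightarrow> (nat \<times> nat \<Rightarrow> real) \<Rightarrow> bool" where
  "certified s r \<longleftrightarrow> tight s r (cycle_mean s r) (potential s r) \<and>
     ergodic_ineqs r (cycle_mean s r) (potential s r)"

lemma certified_imp_bias_induced:
  assumes "s \<in> Xi n E" "certified s r"
  shows "bias_induced n E Vmax r s"
  using assms unfolding bias_induced_iff ergodic_eq_iff_tight certified_def Xi_def by blast

lemma bias_induced_imp_certified:
  assumes "s \<in> Xi n E" "bias_induced n E Vmax r s"
  shows "certified s r"
proof -
  have pp: "policy_pair n E s" using assms(1) unfolding Xi_def by simp
  obtain l u where eq: "ergodic_eq n E Vmax r l u" and t: "tight s r l u"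
    using assms(2) unfolding bias_induced_iff by blast
  have l: "l = cycle_mean s r"
    and u: "\<forall>i\<in>{1..n}. potential s r i = u i + - u (cycle_vertex s)"
    using tight_imp_cycle_mean_potential[OF assms(1) t] by auto
  have "ergodic_eq n E Vmax r l (potential s r)" by (rule ergodic_eq_shift[OF eq u])
  moreover have "tight s r l (potential s r)" by (rule tight_shift[OF pp t u])
  ultimately show ?thesis unfolding certified_def l ergodic_eq_iff by blast
qed

definition critical_weight :: "(nat \<Rightarrow> nat) \<Rightarrow> nat \<times> nat \<Rightarrow> (nat \<times> nat \<Rightarrow> real) \<Rightarrow> real" where
  "critical_weight s e r = cycle_mean s r + potential s r (fst e) - potential s r (snd e)"

lemma P_pol_certified:
  assumes "s \<in> Xi n E" "r \<in> P_pol n E Vmax s"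
  shows "certified s r" "s' \<in> Xi n E \<Longrightarrow> certified s' r \<Longrightarrow> s' = s"
  using assms bias_induced_imp_certified certified_imp_bias_induced unfolding P_pol_def by blast+

lemma P_pol_reduced_cost:
  assumes "s \<in> Xi n E" "r \<in> P_pol n E Vmax s" "(i, j) \<in> E"
  defines "lam \<equiv> game_value n E Vmax r"
  defines "u \<equiv> SOME u. ergodic_eq n E Vmax r lam u"
  shows "r (i, j) - lam + u j - u i = r (i, j) - critical_weight s (i, j) r"
proof -
  have n: "n \<ge> 1" using Xi_cycle_vertex(1)[OF assms(1)] by simp
  have bi: "bias_induced n E Vmax r s" and unique: "\<And>s'. bias_induced n E Vmax r s' \<Longrightarrow> s' = s"
    using assms(2) unfolding P_pol_def by auto
  obtain l0 u0 where eq0: "ergodic_eq n E Vmax r l0 u0" and t0: "tight s r l0 u0"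
    using bi unfolding bias_induced_iff by blast
  have lam: "lam = cycle_mean s r"
    unfolding lam_def game_value_eqI[OF n eq0] using tight_imp_cycle_mean_potential(1)[OF assms(1) t0] .
  have "ergodic_eq n E Vmax r lam u"
    unfolding u_def using eq0 game_value_eqI[OF n eq0] lam_def by (metis someI)
  then obtain s' where "policy_pair n E s'" "tight s' r lam u"
    unfolding ergodic_eq_iff_tight by blast
  with \<open>ergodic_eq n E Vmax r lam u\<close> have "bias_induced n E Vmax r s'"
    unfolding bias_induced_iff by blast
  with unique \<open>tight s' r lam u\<close> have "tight s r lam u" by blast
  then have "u k = potential s r k + u (cycle_vertex s)" if "k \<in> {1..n}" for k
    using tight_imp_cycle_mean_potential(2)[OF assms(1) _ that] by blast
  with edge_vertices[OF assms(3)] show ?thesis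
    unfolding critical_weight_def lam by simp
qed

lemma ergodic_ineqs_cong:
  assumes "\<forall>(i, j)\<in>E. r (i, j) = r' (i, j) \<and> u i = u' i \<and> u j = u' j"
  shows "ergodic_ineqs r l u \<longleftrightarrow> ergodic_ineqs r' l u'"
  unfolding ergodic_ineqs_def using assms by (intro ball_cong refl) auto

lemma certified_cong:
  assumes "s \<in> Xi n E" "\<forall>e\<in>E. r e = r' e"
  shows "certified s r \<longleftrightarrow> certified s r'"
proof -
  have pp: "policy_pair n E s" using assms(1) unfolding Xi_def by simp
  have agree: "\<forall>i\<in>{1..n}. r (i, s i) = r' (i, s i)"
    using assms(2) policy_pair_edge(1)[OF pp] by blast
  note cong = cycle_mean_potential_cong[OF assms(1) agree]
  have "tight s r (cycle_mean s r) (potential s r) \<longleftrightarrow> tight s r' (cycle_mean s r') (potential s r')"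
    unfolding tight_def cong(1) using agree cong(2) policy_pair_edge(2)[OF pp]
    by (intro ball_cong refl) simp
  moreover have "ergodic_ineqs r (cycle_mean s r) (potential s r) \<longleftrightarrow>
      ergodic_ineqs r' (cycle_mean s r') (potential s r')"
    unfolding cong(1) using assms(2) cong(2) edge_vertices by (intro ergodic_ineqs_cong) auto
  ultimately show ?thesis unfolding certified_def by simp
qed

lemma critical_weight_cong:
  assumes "s \<in> Xi n E" "\<forall>i\<in>{1..n}. r (i, s i) = r' (i, s i)" "e \<in> E"
  shows "critical_weight s e r = critical_weight s e r'"
  using cycle_mean_potential_cong[OF assms(1,2)] edge_vertices[of "fst e" "snd e"] assms(3)
  unfolding critical_weight_def by simp

subsection \<open>Near-degenerate weights\<close>

definition avoiding :: "nat \<times> nat \<Rightarrow> (nat \<Rightarrow> nat) set" where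
  "avoiding e = {s \<in> Xi n E. s (fst e) \<noteq> snd e}"

text \<open>Unlike the event \<open>\<Delta>(r) \<ge> K\<close> itself, this event confines, for fixed weights off the
  edge \<open>e\<close>, the weight of \<open>e\<close> to an interval of radius \<open>\<delta>\<close> (\<open>near_degenerate_section\<close>).\<close>

definition near_degenerate :: "real \<Rightarrow> nat \<times> nat \<Rightarrow> (nat \<times> nat \<Rightarrow> real) \<Rightarrow> bool" where
  "near_degenerate \<delta> e r \<longleftrightarrow> (\<exists>s\<in>avoiding e. certified s r \<and>
     0 < \<bar>r e - critical_weight s e r\<bar> \<and> \<bar>r e - critical_weight s e r\<bar> < \<delta> \<and>
     (\<forall>s'\<in>avoiding e - {s}. \<not> certified s' r))"

lemma avoiding_policy_edge:
  assumes "s \<in> avoiding e"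
  shows "(i, s i) \<noteq> e"
  using assms unfolding avoiding_def by (auto simp: prod_eq_iff)

lemma near_degenerate_of_reduced_cost:
  assumes "r \<in> U_set n E Vmax" "(i, j) \<in> E"
  defines "lam \<equiv> game_value n E Vmax r"
  defines "u \<equiv> SOME u. ergodic_eq n E Vmax r lam u"
  assumes "0 < \<bar>r (i, j) - lam + u j - u i\<bar>" "\<bar>r (i, j) - lam + u j - u i\<bar> < \<delta>"
  shows "near_degenerate \<delta> (i, j) r"
proof -
  obtain s where s: "s \<in> Xi n E" "r \<in> P_pol n E Vmax s"
    using assms(1) unfolding U_set_def by blast
  have reduced: "r (i, j) - lam + u j - u i = r (i, j) - critical_weight s (i, j) r"
    unfolding lam_def u_def by (rule P_pol_reduced_cost[OF s assms(2)])
  have "s i \<noteq> j"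
  proof
    assume "s i = j"
    have "cycle_mean s r + potential s r i = r (i, s i) + potential s r (s i)"
      using P_pol_certified(1)[OF s] edge_vertices(1)[OF assms(2)] unfolding certified_def tight_def by blast
    then have "r (i, j) = critical_weight s (i, j) r"
      unfolding critical_weight_def \<open>s i = j\<close> by simp
    with reduced assms(5) show False by simp
  qed
  with s(1) have "s \<in> avoiding (i, j)" unfolding avoiding_def by simp
  moreover have "\<not> certified s' r" if "s' \<in> avoiding (i, j) - {s}" for s'
    using P_pol_certified(2)[OF s, of s'] that unfolding avoiding_def by blast
  ultimately show ?thesis
    unfolding near_degenerate_def using P_pol_certified(1)[OF s] reduced assms(5,6) by auto
qed

lemma ergodic_eq_value_between_weights:
  assumes "n \<ge> 1" "ergodic_eq n E Vmax r l u"
  shows "\<exists>e\<in>E. r e \<le> l" "\<exists>e\<in>E. l \<le> r e"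
proof -
  obtain s where pp: "policy_pair n E s" and t: "tight s r l u"
    using assms(2) unfolding ergodic_eq_iff_tight by blast
  have fin: "finite (u ` {1..n})" and ne: "u ` {1..n} \<noteq> {}" using assms(1) by auto
  obtain i where i: "i \<in> {1..n}" "u i = Min (u ` {1..n})" using Min_in[OF fin ne] by auto
  obtain k where k: "k \<in> {1..n}" "u k = Max (u ` {1..n})" using Max_in[OF fin ne] by auto
  have "u i \<le> u (s i)" "u (s k) \<le> u k"
    using i k Min_le[OF fin] Max_ge[OF fin] policy_pair_edge(2)[OF pp] by auto
  with t i(1) k(1) policy_pair_edge(1)[OF pp] show "\<exists>e\<in>E. r e \<le> l" "\<exists>e\<in>E. l \<le> r e"
    unfolding tight_def by (metis add_le_cancel_left add_le_cancel_right)+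
qed

lemma near_degenerate_of_cond_number:
  assumes "r \<in> U_set n E Vmax" "1 < K" "\<forall>e\<in>E. \<forall>e'\<in>E. \<bar>r e - r e'\<bar> < T"
    and "K \<le> cond_number n E Vmax r"
  shows "\<exists>e\<in>E. near_degenerate (T / K) e r"
proof -
  obtain s where s: "s \<in> Xi n E" "r \<in> P_pol n E Vmax s" using assms(1) unfolding U_set_def by blast
  have n: "n \<ge> 1" using Xi_cycle_vertex(1)[OF s(1)] by simp
  obtain l0 u0 where eq0: "ergodic_eq n E Vmax r l0 u0"
    using s(2) unfolding P_pol_def bias_induced_def by blast
  define lam where "lam = game_value n E Vmax r"
  define u where "u = (SOME u. ergodic_eq n E Vmax r lam u)"
  define S where "S = {\<bar>r (i, j) - lam + u j - u i\<bar> | i j. (i, j) \<in> E \<and> r (i, j) - lam + u j - u i \<noteq> 0}"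
  define N where "N = Max {\<bar>r e - lam\<bar> | e. e \<in> E}"
  have cond: "cond_number n E Vmax r = (if S = {} then 1 else N / Min S)"
    unfolding cond_number_def Let_def lam_def u_def S_def N_def by simp
  with assms(2,4) have S: "S \<noteq> {}" by auto
  have "S \<subseteq> (\<lambda>(i, j). \<bar>r (i, j) - lam + u j - u i\<bar>) ` E" unfolding S_def by auto
  then have "finite S" using finite_edges finite_subset by blast
  then obtain i j where ij: "(i, j) \<in> E" "Min S = \<bar>r (i, j) - lam + u j - u i\<bar>" "r (i, j) - lam + u j - u i \<noteq> 0"
    using Min_in[OF _ S] unfolding S_def by blast
  have "{\<bar>r e - lam\<bar> | e. e \<in> E} = (\<lambda>e. \<bar>r e - lam\<bar>) ` E" by blast
  then obtain e where e: "e \<in> E" "N = \<bar>r e - lam\<bar>"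
    using Max_in[of "{\<bar>r e - lam\<bar> | e. e \<in> E}"] finite_edges ij(1) unfolding N_def by fastforce
  have lam: "lam = l0" unfolding lam_def by (rule game_value_eqI[OF n eq0])
  obtain e1 e2 where "e1 \<in> E" "r e1 \<le> lam" "e2 \<in> E" "lam \<le> r e2"
    using ergodic_eq_value_between_weights[OF n eq0] lam by blast
  moreover from this assms(3) e(1) have "\<bar>r e - r e1\<bar> < T" "\<bar>r e - r e2\<bar> < T" by blast+
  ultimately have "N < T" using e(2) by arith
  moreover have "K * Min S \<le> N"
    using assms(4) cond S ij(3) by (simp add: ij(2) le_divide_eq)
  ultimately have "Min S < T / K" using assms(2) by (simp add: less_divide_eq mult.commute)
  then have "near_degenerate (T / K) (i, j) r"
    using near_degenerate_of_reduced_cost[OF assms(1) ij(1)] ij(2,3) unfolding lam_def u_def by simp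
  with ij(1) show ?thesis by blast
qed

lemma avoiding_update:
  assumes "s \<in> avoiding e"
  shows "cycle_mean s (r(e := x)) = cycle_mean s r"
    and "i \<in> {1..n} \<Longrightarrow> potential s (r(e := x)) i = potential s r i"
proof -
  have "s \<in> Xi n E" using assms unfolding avoiding_def by simp
  moreover have "\<forall>i\<in>{1..n}. (r(e := x)) (i, s i) = r (i, s i)"
    using avoiding_policy_edge[OF assms] by simp
  ultimately show "cycle_mean s (r(e := x)) = cycle_mean s r"
    and "i \<in> {1..n} \<Longrightarrow> potential s (r(e := x)) i = potential s r i"
    by (simp_all add: cycle_mean_potential_cong)
qed

lemma certified_update_mono:
  assumes "s \<in> avoiding e" "certified s (r(e := y))"
    and "fst e \<in> Vmax \<and> x \<le> y \<or> fst e \<notin> Vmax \<and> y \<le> x"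
  shows "certified s (r(e := x))"
proof -
  have pp: "policy_pair n E s" using assms(1) unfolding avoiding_def Xi_def by simp
  note cm = avoiding_update(1)[OF assms(1)] and pot = avoiding_update(2)[OF assms(1)]
  note edge = avoiding_policy_edge[OF assms(1)]
  have "cycle_mean s (r(e := x)) + potential s (r(e := x)) i
      = (r(e := x)) (i, s i) + potential s (r(e := x)) (s i)" if i: "i \<in> {1..n}" for i
  proof -
    have "cycle_mean s (r(e := y)) + potential s (r(e := y)) i
        = (r(e := y)) (i, s i) + potential s (r(e := y)) (s i)"
      using assms(2) i unfolding certified_def tight_def by blast
    then show ?thesis using pot[OF i] pot[OF policy_pair_edge(2)[OF pp i]] edge[of i] by (simp add: cm)
  qed
  moreover have "(i \<in> Vmax \<longrightarrow> (r(e := x)) (i, j) + potential s (r(e := x)) j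
          \<le> cycle_mean s (r(e := x)) + potential s (r(e := x)) i) \<and>
       (i \<notin> Vmax \<longrightarrow> cycle_mean s (r(e := x)) + potential s (r(e := x)) i
          \<le> (r(e := x)) (i, j) + potential s (r(e := x)) j)" if ij: "(i, j) \<in> E" for i j
  proof -
    have "(i \<in> Vmax \<longrightarrow> (r(e := y)) (i, j) + potential s (r(e := y)) j
          \<le> cycle_mean s (r(e := y)) + potential s (r(e := y)) i) \<and>
       (i \<notin> Vmax \<longrightarrow> cycle_mean s (r(e := y)) + potential s (r(e := y)) i
          \<le> (r(e := y)) (i, j) + potential s (r(e := y)) j)"
      using assms(2) ij unfolding certified_def ergodic_ineqs_def by blast
    then show ?thesis
      using pot[OF edge_vertices(1)[OF ij]] pot[OF edge_vertices(2)[OF ij]] assms(3)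
      by (cases "(i, j) = e") (auto simp: cm)
  qed
  ultimately show ?thesis unfolding certified_def tight_def ergodic_ineqs_def by blast
qed

lemma near_degenerate_section:
  assumes "e \<in> E"
  shows "\<exists>\<theta>. \<forall>x. near_degenerate \<delta> e (r(e := x)) \<longrightarrow> \<bar>x - \<theta>\<bar> < \<delta>"
proof (cases "\<exists>x0. near_degenerate \<delta> e (r(e := x0))")
  case True
  then obtain x0 s0 where s0: "s0 \<in> avoiding e" "certified s0 (r(e := x0))"
    and others0: "\<forall>s'\<in>avoiding e - {s0}. \<not> certified s' (r(e := x0))"
    unfolding near_degenerate_def by blast
  have "\<bar>x - critical_weight s0 e r\<bar> < \<delta>" if nd: "near_degenerate \<delta> e (r(e := x))" for x
  proof -
    obtain s1 where s1: "s1 \<in> avoiding e" "certified s1 (r(e := x))"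
      and close: "\<bar>x - critical_weight s1 e (r(e := x))\<bar> < \<delta>"
      and others1: "\<forall>s'\<in>avoiding e - {s1}. \<not> certified s' (r(e := x))"
      using nd unfolding near_degenerate_def by auto
    have "s1 = s0"
    proof (rule ccontr)
      assume "s1 \<noteq> s0"
      then have "\<not> certified s0 (r(e := x))" "\<not> certified s1 (r(e := x0))"
        using others0 others1 s0(1) s1(1) by auto
      moreover have "certified s0 (r(e := x))" if "fst e \<in> Vmax \<and> x \<le> x0 \<or> fst e \<notin> Vmax \<and> x0 \<le> x"
        using certified_update_mono[OF s0(1,2) that] by simp
      moreover have "certified s1 (r(e := x0))" if "fst e \<in> Vmax \<and> x0 \<le> x \<or> fst e \<notin> Vmax \<and> x \<le> x0"
        using certified_update_mono[OF s1(1), of r x x0] s1(2) that by simp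
      ultimately show False using linorder_le_cases[of x x0] by blast
    qed
    with close avoiding_update[OF s1(1)] edge_vertices[of "fst e" "snd e"] assms show ?thesis
      unfolding critical_weight_def by simp
  qed
  then show ?thesis by blast
qed auto

lemma near_degenerate_cong:
  assumes "\<forall>e\<in>E. r e = r' e" "e \<in> E"
  shows "near_degenerate \<delta> e r \<longleftrightarrow> near_degenerate \<delta> e r'"
proof -
  have "certified s r \<longleftrightarrow> certified s r'" "critical_weight s e r = critical_weight s e r'"
    if "s \<in> avoiding e" for s
  proof -
    have s: "s \<in> Xi n E" using that unfolding avoiding_def by simp
    then have "policy_pair n E s" unfolding Xi_def by simp
    then have "\<forall>i\<in>{1..n}. r (i, s i) = r' (i, s i)" using assms(1) policy_pair_edge(1) by blast
    with s assms show "certified s r \<longleftrightarrow> certified s r'" "critical_weight s e r = critical_weight s e r'"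
      using certified_cong critical_weight_cong by blast+
  qed
  with assms show ?thesis unfolding near_degenerate_def by (intro bex_cong refl) auto
qed

subsection \<open>Measurability\<close>

lemma finite_policy_pairs: "finite {s. policy_pair n E s}"
proof (rule finite_subset)
  show "{s. policy_pair n E s} \<subseteq> (\<lambda>g i. if i \<in> {1..n} then g i else 0) ` ({1..n} \<rightarrow>\<^sub>E {1..n})"
  proof
    fix s assume "s \<in> {s. policy_pair n E s}"
    then have pp: "policy_pair n E s" by simp
    then have "s = (\<lambda>i. if i \<in> {1..n} then restrict s {1..n} i else 0)"
      unfolding policy_pair_def by auto
    moreover have "restrict s {1..n} \<in> {1..n} \<rightarrow>\<^sub>E {1..n}" using policy_pair_edge(2)[OF pp] by auto
    ultimately show "s \<in> (\<lambda>g i. if i \<in> {1..n} then g i else 0) ` ({1..n} \<rightarrow>\<^sub>E {1..n})" by blast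
  qed
qed (intro finite_imageI finite_PiE; simp)

lemma finite_avoiding: "finite (avoiding e)"
  by (rule finite_subset[OF _ finite_policy_pairs]) (auto simp: avoiding_def Xi_def)

context
  fixes N :: "'a measure" and \<rho> :: "'a \<Rightarrow> nat \<times> nat \<Rightarrow> real"
  assumes weights_measurable: "\<And>e. e \<in> E \<Longrightarrow> (\<lambda>z. \<rho> z e) \<in> borel_measurable N"
begin

lemma path_weight_measurable:
  assumes "policy_pair n E s" "i \<in> {1..n}"
  shows "(\<lambda>z. path_weight s (\<rho> z) i k) \<in> borel_measurable N"
  unfolding path_weight_def
  using weights_measurable policy_pair_edge(1)[OF assms(1) policy_pair_funpow[OF assms]]
  by (intro borel_measurable_sum) simp

lemma cycle_mean_potential_measurable:
  assumes "s \<in> Xi n E"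
  shows "(\<lambda>z. cycle_mean s (\<rho> z)) \<in> borel_measurable N"
    and "i \<in> {1..n} \<Longrightarrow> (\<lambda>z. potential s (\<rho> z) i) \<in> borel_measurable N"
proof -
  have pp: "policy_pair n E s" using assms unfolding Xi_def by simp
  show cm: "(\<lambda>z. cycle_mean s (\<rho> z)) \<in> borel_measurable N"
    unfolding cycle_mean_def
    by (intro borel_measurable_divide borel_measurable_const path_weight_measurable[OF pp]
        Xi_cycle_vertex(1)[OF assms])
  show "(\<lambda>z. potential s (\<rho> z) i) \<in> borel_measurable N" if "i \<in> {1..n}"
    unfolding potential_def
    by (intro borel_measurable_diff borel_measurable_times borel_measurable_const cm
        path_weight_measurable[OF pp that])
qed

lemma certified_measurable:
  assumes "s \<in> Xi n E"
  shows "Measurable.pred N (\<lambda>z. certified s (\<rho> z))"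
proof -
  have pp: "policy_pair n E s" using assms unfolding Xi_def by simp
  note cm = cycle_mean_potential_measurable(1)[OF assms]
    and pot = cycle_mean_potential_measurable(2)[OF assms]
  have "Measurable.pred N (\<lambda>z. tight s (\<rho> z) (cycle_mean s (\<rho> z)) (potential s (\<rho> z)))"
    unfolding tight_def
    by (intro pred_intros_finite(3) finite_atLeastAtMost pred_borel_eq borel_measurable_add cm pot
        weights_measurable policy_pair_edge[OF pp])
  moreover have "Measurable.pred N (\<lambda>z. ergodic_ineqs (\<rho> z) (cycle_mean s (\<rho> z)) (potential s (\<rho> z)))"
    unfolding ergodic_ineqs_def
  proof (intro pred_intros_finite(3) finite_edges)
    fix e assume e: "e \<in> E"
    obtain i j where [simp]: "e = (i, j)" by fastforce
    show "Measurable.pred N (\<lambda>z. case e of (i, j) \<Rightarrow>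
        (i \<in> Vmax \<longrightarrow> \<rho> z (i, j) + potential s (\<rho> z) j \<le> cycle_mean s (\<rho> z) + potential s (\<rho> z) i) \<and>
        (i \<notin> Vmax \<longrightarrow> cycle_mean s (\<rho> z) + potential s (\<rho> z) i \<le> \<rho> z (i, j) + potential s (\<rho> z) j))"
      using e edge_vertices[of i j]
      by (simp, intro pred_intros_logic measurable_const pred_borel_le borel_measurable_add cm pot
          weights_measurable) simp_all
  qed
  ultimately show ?thesis unfolding certified_def by (rule pred_intros_logic)
qed

lemma near_degenerate_measurable:
  assumes "e \<in> E"
  shows "Measurable.pred N (\<lambda>z. near_degenerate \<delta> e (\<rho> z))"
  unfolding near_degenerate_def
proof (intro pred_intros_finite(4) finite_avoiding)
  fix s assume s: "s \<in> avoiding e"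
  then have Xi: "s \<in> Xi n E" unfolding avoiding_def by simp
  have "(\<lambda>z. \<bar>\<rho> z e - critical_weight s e (\<rho> z)\<bar>) \<in> borel_measurable N"
    unfolding critical_weight_def using assms edge_vertices[of "fst e" "snd e"]
    by (intro borel_measurable_abs borel_measurable_diff borel_measurable_add weights_measurable
        cycle_mean_potential_measurable[OF Xi]) simp_all
  moreover have "Measurable.pred N (\<lambda>z. \<forall>s'\<in>avoiding e - {s}. \<not> certified s' (\<rho> z))"
    by (intro pred_intros_finite(3) pred_intros_logic certified_measurable finite_Diff finite_avoiding)
      (simp add: avoiding_def)
  ultimately show "Measurable.pred N (\<lambda>z. certified s (\<rho> z) \<and> 0 < \<bar>\<rho> z e - critical_weight s e (\<rho> z)\<bar>
      \<and> \<bar>\<rho> z e - critical_weight s e (\<rho> z)\<bar> < \<delta> \<and> (\<forall>s'\<in>avoiding e - {s}. \<not> certified s' (\<rho> z)))"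
    by (intro pred_intros_logic certified_measurable[OF Xi] pred_borel_less borel_measurable_const)
qed

end

end

lemma tail_parameters:
  fixes m \<epsilon> \<phi> :: real
  assumes "m \<ge> 1" "0 < \<epsilon>" "\<epsilon> < 1" "\<phi> > 0"
  defines "s \<equiv> sqrt (2 * m / \<epsilon>)"
  defines "K \<equiv> 8 * m / \<epsilon> * (\<phi> + s)"
  shows "K > 1" "s / \<phi> > 0" "m * ((1 / \<phi>\<^sup>2) / (s / \<phi>)\<^sup>2) = \<epsilon> / 2"
    and "m * (2 * \<phi> * ((2 + 2 * (s / \<phi>)) / K)) = \<epsilon> / 2"
proof -
  have s: "s\<^sup>2 = 2 * m / \<epsilon>" "s \<ge> 1"
    unfolding s_def using assms(1-3) by (simp_all add: le_divide_eq)
  have "8 * m / \<epsilon> \<ge> 8" using assms(1-3) by (simp add: le_divide_eq)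
  then show K: "K > 1" unfolding K_def using s(2) assms(4) by (smt (verit) mult_le_cancel_left1)
  show "s / \<phi> > 0" using s(2) assms(4) by simp
  show "m * ((1 / \<phi>\<^sup>2) / (s / \<phi>)\<^sup>2) = \<epsilon> / 2"
    using s assms(1,2,4) by (simp add: field_simps)
  have "m * (2 * \<phi> * ((2 + 2 * (s / \<phi>)) / K)) = m * (4 * (\<phi> + s)) / K"
    using assms(4) K by (simp add: field_simps)
  also have "m * (4 * (\<phi> + s)) = K * (\<epsilon> / 2)"
    unfolding K_def using assms(2) by (simp add: field_simps)
  finally show "m * (2 * \<phi> * ((2 + 2 * (s / \<phi>)) / K)) = \<epsilon> / 2" using K by simp
qed

context mean_payoff_game
begin

subsection \<open>Probability bounds\<close>

lemma near_degenerate_prob_le: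
  fixes R :: "'a \<Rightarrow> nat \<times> nat \<Rightarrow> real"
  assumes "prob_space M" and indep: "prob_space.indep_vars M (\<lambda>_. borel) (\<lambda>e \<omega>. R \<omega> e) E"
    and e: "e \<in> E" and dist: "distributed M lborel (\<lambda>\<omega>. R \<omega> e) (\<lambda>y. ennreal (f y))"
    and "\<forall>y. f y \<le> \<phi>" "\<phi> \<ge> 0" "\<delta> \<ge> 0"
  shows "{\<omega> \<in> space M. near_degenerate \<delta> e (R \<omega>)} \<in> sets M"
    and "measure M {\<omega> \<in> space M. near_degenerate \<delta> e (R \<omega>)} \<le> 2 * \<phi> * \<delta>"
proof -
  interpret prob_space M by fact
  have R: "\<And>e. e \<in> E \<Longrightarrow> (\<lambda>\<omega>. R \<omega> e) \<in> borel_measurable M"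
    using indep unfolding indep_vars_def by simp
  show "{\<omega> \<in> space M. near_degenerate \<delta> e (R \<omega>)} \<in> sets M"
    using near_degenerate_measurable[OF R e] unfolding pred_def by simp
  let ?S = "PiM (E - {e}) (\<lambda>_. borel :: real measure)" and ?T = "PiM {e} (\<lambda>_. borel :: real measure)"
  define G where "G = {p \<in> space (?S \<Otimes>\<^sub>M ?T). near_degenerate \<delta> e ((fst p)(e := snd p e))}"
  have "(\<lambda>p. ((fst p)(e := snd p e)) e') \<in> borel_measurable (?S \<Otimes>\<^sub>M ?T)" if "e' \<in> E" for e'
  proof (cases "e' = e")
    case True
    have "(\<lambda>p. snd p e) \<in> borel_measurable (?S \<Otimes>\<^sub>M ?T)"
      by (rule measurable_compose[OF measurable_snd measurable_component_singleton]) simp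
    with True show ?thesis by simp
  next
    case False
    have "(\<lambda>p. fst p e') \<in> borel_measurable (?S \<Otimes>\<^sub>M ?T)"
      by (rule measurable_compose[OF measurable_fst measurable_component_singleton]) (use that False in simp)
    with False show ?thesis by simp
  qed
  from near_degenerate_measurable[where N = "?S \<Otimes>\<^sub>M ?T" and \<rho> = "\<lambda>p. (fst p)(e := snd p e)", OF this e]
  have G: "G \<in> sets (?S \<Otimes>\<^sub>M ?T)" unfolding pred_def G_def by simp
  have sections: "\<exists>c. \<forall>z. (y, z) \<in> G \<longrightarrow> \<bar>z e - c\<bar> < \<delta>" for y
  proof -
    obtain c where "\<forall>x. near_degenerate \<delta> e (y(e := x)) \<longrightarrow> \<bar>x - c\<bar> < \<delta>"
      using near_degenerate_section[OF e] by blast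
    then show ?thesis unfolding G_def by (intro exI[of _ c]) auto
  qed
  have "near_degenerate \<delta> e (R \<omega>) \<longleftrightarrow> near_degenerate \<delta> e ((restrict (R \<omega>) (E - {e}))(e := R \<omega> e))" for \<omega>
    using e by (intro near_degenerate_cong) auto
  then have "{\<omega> \<in> space M. near_degenerate \<delta> e (R \<omega>)}
      = {\<omega> \<in> space M. (restrict (R \<omega>) (E - {e}), restrict (R \<omega>) {e}) \<in> G}"
    unfolding G_def by (auto simp: space_pair_measure space_PiM)
  also have "prob \<dots> \<le> 2 * \<phi> * \<delta>"
  proof (rule indep_section_prob_le[OF _ dist assms(5,6) _ G assms(7) sections])
    show "indep_var ?S (\<lambda>\<omega>. restrict (R \<omega>) (E - {e})) ?T (\<lambda>\<omega>. restrict (R \<omega>) {e})"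
      using e by (intro indep_var_restrict[OF indep]) auto
  qed simp
  finally show "measure M {\<omega> \<in> space M. near_degenerate \<delta> e (R \<omega>)} \<le> 2 * \<phi> * \<delta>" .
qed

lemma near_degenerate_union_prob_le:
  fixes R :: "'a \<Rightarrow> nat \<times> nat \<Rightarrow> real" and f :: "nat \<times> nat \<Rightarrow> real \<Rightarrow> real" and \<phi> \<delta> :: real
  assumes "prob_space M" "prob_space.indep_vars M (\<lambda>_. borel) (\<lambda>e \<omega>. R \<omega> e) E"
    and "\<forall>e\<in>E. distributed M lborel (\<lambda>\<omega>. R \<omega> e) (\<lambda>y. ennreal (f e y))"
    and "\<forall>e\<in>E. \<forall>y. f e y \<le> \<phi>" "\<phi> \<ge> 0" "\<delta> \<ge> 0"
  shows "(\<Union>e\<in>E. {\<omega> \<in> space M. near_degenerate \<delta> e (R \<omega>)}) \<in> sets M"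
    and "measure M (\<Union>e\<in>E. {\<omega> \<in> space M. near_degenerate \<delta> e (R \<omega>)}) \<le> real (card E) * (2 * \<phi> * \<delta>)"
proof -
  have events: "{\<omega> \<in> space M. near_degenerate \<delta> e (R \<omega>)} \<in> sets M"
    and bound: "measure M {\<omega> \<in> space M. near_degenerate \<delta> e (R \<omega>)} \<le> 2 * \<phi> * \<delta>" if "e \<in> E" for e
    using near_degenerate_prob_le[OF assms(1,2) that _ _ assms(5,6), of "f e"] assms(3,4) that by auto
  then show "(\<Union>e\<in>E. {\<omega> \<in> space M. near_degenerate \<delta> e (R \<omega>)}) \<in> sets M"
    by (intro sets.finite_UN finite_edges)
  have "measure M (\<Union>e\<in>E. {\<omega> \<in> space M. near_degenerate \<delta> e (R \<omega>)})
      \<le> (\<Sum>e\<in>E. measure M {\<omega> \<in> space M. near_degenerate \<delta> e (R \<omega>)})"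
    using events by (intro measure_UNION_le finite_edges)
  also have "\<dots> \<le> (\<Sum>e\<in>E. 2 * \<phi> * \<delta>)" using bound by (intro sum_mono)
  finally show "measure M (\<Union>e\<in>E. {\<omega> \<in> space M. near_degenerate \<delta> e (R \<omega>)}) \<le> real (card E) * (2 * \<phi> * \<delta>)"
    by simp
qed

lemma cond_number_tail_bound:
  fixes M :: "'a measure" and R :: "'a \<Rightarrow> nat \<times> nat \<Rightarrow> real" and f :: "nat \<times> nat \<Rightarrow> real \<Rightarrow> real"
  assumes "n \<ge> 1" "prob_space M"
    and indep: "prob_space.indep_vars M (\<lambda>_. borel) (\<lambda>e \<omega>. R \<omega> e) E"
    and dist: "\<forall>e\<in>E. distributed M lborel (\<lambda>\<omega>. R \<omega> e) (\<lambda>y. ennreal (f e y))"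
    and "\<phi> > 0" and density_le: "\<forall>e\<in>E. \<forall>y. f e y \<le> \<phi>"
    and square_integrable: "\<forall>e\<in>E. integrable M (\<lambda>\<omega>. (R \<omega> e)\<^sup>2)"
    and mean: "\<forall>e\<in>E. integral\<^sup>L M (\<lambda>\<omega>. R \<omega> e) \<in> {-1..1}"
    and variance: "\<forall>e\<in>E. integral\<^sup>L M (\<lambda>\<omega>. (R \<omega> e - integral\<^sup>L M (\<lambda>\<omega>. R \<omega> e))\<^sup>2) \<le> 1 / \<phi>\<^sup>2"
    and "\<epsilon> > 0"
  shows "\<exists>A\<in>sets M. {\<omega> \<in> space M. R \<omega> \<in> U_set n E Vmax \<and>
           cond_number n E Vmax (R \<omega>) \<ge> 8 * real (card E) / \<epsilon> * (\<phi> + sqrt (2 * real (card E) / \<epsilon>))}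
         \<subseteq> A \<and> measure M A \<le> \<epsilon>"
proof -
  interpret prob_space M by fact
  consider "\<epsilon> \<ge> 1" | "\<epsilon> < 1" by linarith
  then show ?thesis
  proof cases
    case 1
    then show ?thesis using prob_space by (intro bexI[of _ "space M"]) auto
  next
    case 2
    define m where "m = real (card E)"
    define s where "s = sqrt (2 * m / \<epsilon>)"
    define K where "K = 8 * m / \<epsilon> * (\<phi> + s)"
    define t where "t = s / \<phi>"
    define \<delta> where "\<delta> = (2 + 2 * t) / K"
    have "E \<noteq> {}" using assms(1) game_graph unfolding game_graph_def by fastforce
    then have "m \<ge> 1" unfolding m_def using finite_edges by (simp add: Suc_leI card_gt_0_iff)
    note params = tail_parameters[OF this \<open>\<epsilon> > 0\<close> 2 \<open>\<phi> > 0\<close>, folded s_def, folded K_def, folded t_def]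
    define A0 where "A0 = (\<Union>e\<in>E. {\<omega> \<in> space M. t \<le> \<bar>R \<omega> e - expectation (\<lambda>\<omega>. R \<omega> e)\<bar>})"
    define A1 where "A1 = (\<Union>e\<in>E. {\<omega> \<in> space M. near_degenerate \<delta> e (R \<omega>)})"
    have R: "\<And>e. e \<in> E \<Longrightarrow> random_variable borel (\<lambda>\<omega>. R \<omega> e)"
      using indep unfolding indep_vars_def by simp
    have A0: "A0 \<in> events" unfolding A0_def using R by (intro sets.finite_UN finite_edges) measurable
    have "prob A0 \<le> m * ((1 / \<phi>\<^sup>2) / t\<^sup>2)"
      unfolding A0_def m_def using R square_integrable variance params(2)
      by (intro prob_deviation_union_le finite_edges) auto
    also have "\<dots> = \<epsilon> / 2" by (rule params(3))
    finally have prob_A0: "prob A0 \<le> \<epsilon> / 2" .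
    have "\<delta> \<ge> 0" unfolding \<delta>_def using params(1,2) by simp
    note A1 = near_degenerate_union_prob_le[OF assms(2) indep dist density_le less_imp_le[OF \<open>\<phi> > 0\<close>] this,
        folded A1_def]
    have prob_A1: "prob A1 \<le> \<epsilon> / 2"
      using A1(2) params(4) \<open>\<phi> > 0\<close> unfolding m_def \<delta>_def by simp
    have "\<omega> \<in> A0 \<union> A1"
      if \<omega>: "\<omega> \<in> space M" "R \<omega> \<in> U_set n E Vmax" "K \<le> cond_number n E Vmax (R \<omega>)" for \<omega>
    proof (rule ccontr)
      assume "\<omega> \<notin> A0 \<union> A1"
      with \<omega>(1) have "\<bar>R \<omega> e - expectation (\<lambda>\<omega>. R \<omega> e)\<bar> < t" if "e \<in> E" for e
        using that unfolding A0_def by auto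
      with mean have "\<forall>e\<in>E. \<forall>e'\<in>E. \<bar>R \<omega> e - R \<omega> e'\<bar> < 2 + 2 * t"
        by (smt (verit) atLeastAtMost_iff)
      from near_degenerate_of_cond_number[OF \<omega>(2) params(1) this \<omega>(3)] \<omega>(1) \<open>\<omega> \<notin> A0 \<union> A1\<close>
      show False unfolding A1_def \<delta>_def by blast
    qed
    moreover have "prob (A0 \<union> A1) \<le> \<epsilon>" using measure_Un_le[OF A0 A1(1)] prob_A0 prob_A1 by simp
    ultimately show ?thesis
      using A0 A1(1) unfolding K_def s_def m_def by (intro bexI[of _ "A0 \<union> A1"]) auto
  qed
qed

end

theorem mainTheorem15:
  fixes n :: nat and E :: "(nat \<times> nat) set" and Vmax :: "nat set"
    and M :: "'a measure" and R :: "'a \<Rightarrow> nat \<times> nat \<Rightarrow> real"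
    and f :: "nat \<times> nat \<Rightarrow> real \<Rightarrow> real" and \<phi> :: real
  assumes "n \<ge> 1"
    and "game_graph n E Vmax"
    and "ergodic_graph n E Vmax"
    and "prob_space M"
    and "prob_space.indep_vars M (\<lambda>_. borel) (\<lambda>e \<omega>. R \<omega> e) E"
    and "\<forall>e\<in>E. distributed M lborel (\<lambda>\<omega>. R \<omega> e) (\<lambda>y. ennreal (f e y))"
    and "\<phi> > 0"
    and "\<forall>e\<in>E. \<forall>y. 0 \<le> f e y \<and> f e y \<le> \<phi>"
    and "\<forall>e\<in>E. integrable M (\<lambda>\<omega>. (R \<omega> e)\<^sup>2)"
    and "\<forall>e\<in>E. integral\<^sup>L M (\<lambda>\<omega>. R \<omega> e) \<in> {-1..1}"
    and "\<forall>e\<in>E. integral\<^sup>L M (\<lambda>\<omega>. (R \<omega> e - integral\<^sup>L M (\<lambda>\<omega>. R \<omega> e))\<^sup>2) \<le> 1 / \<phi>\<^sup>2"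
  shows "(\<forall>\<epsilon>>0. \<exists>A\<in>sets M.
            {\<omega>\<in>space M. R \<omega> \<in> U_set n E Vmax \<and>
               cond_number n E Vmax (R \<omega>) \<ge> 8 * real (card E) / \<epsilon> * (\<phi> + sqrt (2 * real (card E) / \<epsilon>))}
              \<subseteq> A \<and> measure M A \<le> \<epsilon>)
       \<and> (\<exists>A\<in>sets M.
            {\<omega>\<in>space M. R \<omega> \<in> U_set n E Vmax \<and>
               cond_number n E Vmax (R \<omega>) \<ge> 8 * real n * real (card E) * (\<phi> + sqrt (2 * real n * real (card E)))}
              \<subseteq> A \<and> measure M A \<le> 1 / real n)"
proof -
  interpret mean_payoff_game n E Vmax by unfold_locales fact
  have tail: "\<exists>A\<in>sets M. {\<omega> \<in> space M. R \<omega> \<in> U_set n E Vmax \<and>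
        cond_number n E Vmax (R \<omega>) \<ge> 8 * real (card E) / \<epsilon> * (\<phi> + sqrt (2 * real (card E) / \<epsilon>))}
      \<subseteq> A \<and> measure M A \<le> \<epsilon>" if "\<epsilon> > 0" for \<epsilon>
    using assms that by (intro cond_number_tail_bound) auto
  have "8 * real (card E) / (1 / real n) = 8 * real n * real (card E)"
    and "2 * real (card E) / (1 / real n) = 2 * real n * real (card E)" by simp_all
  with tail[of "1 / real n"] assms(1) have "\<exists>A\<in>sets M. {\<omega> \<in> space M. R \<omega> \<in> U_set n E Vmax \<and>
        cond_number n E Vmax (R \<omega>) \<ge> 8 * real n * real (card E) * (\<phi> + sqrt (2 * real n * real (card E)))}
      \<subseteq> A \<and> measure M A \<le> 1 / real n" by (simp only:) simp
  with tail show ?thesis by blast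
qed

end
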